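(* Let $W$ be a complex vector space of complex dimension $m \geq 2$ and $G=\mathrm{SL}(W,\mathbb{C})$. Let $f:W \to \mathbb{R}$ be a continuous function such that for each $g \in G$ the function $f \circ g-f$ is a (real) linear function on $W$. Then $f$ is affine. *)

theory Defs
  imports "HOL-Analysis.Analysis"
begin

end

theory Submission
  imports Defs
begin

text \<open>Let \<open>\<zeta> \<noteq> 1\<close> be an \<open>m\<close>-th root of unity, so that \<open>\<zeta> I \<in> SL(W)\<close>. The linear map
  \<open>L x = f (\<zeta> x) - f x\<close> is a coboundary \<open>l (\<zeta> x) - l x\<close> of the linear map
  \<open>l x = L (x / (\<zeta> - 1))\<close>, so \<open>h = f - l\<close> is invariant under \<open>\<zeta> I\<close>. For \<open>g \<in> SL(W)\<close> the map
  \<open>h \<circ> g - h\<close> is linear and, as \<open>g\<close> commutes with \<open>\<zeta> I\<close>, also \<open>\<zeta>\<close>-invariant; a linear map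
  invariant under a scalar \<open>\<zeta> \<noteq> 1\<close> vanishes. Hence \<open>h\<close> is \<open>SL(W)\<close>-invariant. Transvections
  show that for \<open>m \<ge> 2\<close> such an \<open>h\<close> is invariant under nonzero scalings, and letting the
  scaling tend to \<open>0\<close> the continuous \<open>h\<close> is constant.\<close>

lemma exists_nontrivial_root_of_unity:
  assumes "n \<ge> 2"
  obtains \<zeta> :: complex where "\<zeta> ^ n = 1" "\<zeta> \<noteq> 1"
proof -
  have "\<not> {z::complex. z ^ n = 1} \<subseteq> {1}"
  proof
    assume "{z::complex. z ^ n = 1} \<subseteq> {1}"
    then have "card {z::complex. z ^ n = 1} \<le> card {1::complex}"
      by (intro card_mono) auto
    with assms card_roots_unity_eq[of n] show False by simp
  qed
  then show ?thesis using that by blast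
qed

lemma det_mat: "det (mat c :: 'a::comm_ring_1^'n^'n) = c ^ CARD('n)"
  by (simp add: det_diagonal mat_def)

lemma matrix_vector_mult_mat: "mat c *v x = c *s (x :: 'a::comm_semiring_1^'n)"
  by (simp add: vec_eq_iff matrix_vector_mult_def mat_def if_distrib[where f="\<lambda>u. u * _"]
      cong: if_cong)

lemma linear_vector_scalar_mult: "linear (\<lambda>y::complex^'n. c *s y)"
  by (rule linearI) (auto simp: vec_eq_iff scaleR_conv_of_real algebra_simps)

lemma of_real_vector_scalar_mult: "(of_real r :: complex) *s (x::complex^'n) = r *\<^sub>R x"
  by (simp add: vec_eq_iff) (simp add: scaleR_conv_of_real)

lemma vector_scalar_mult_sub_inverse:
  "\<zeta> \<noteq> 1 \<Longrightarrow> \<zeta> *s (inverse (\<zeta> - 1) *s x) - inverse (\<zeta> - 1) *s x = (x :: 'a::field^'n)"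
proof -
  assume "\<zeta> \<noteq> 1"
  have "\<zeta> *s (inverse (\<zeta> - 1) *s x) - inverse (\<zeta> - 1) *s x = ((\<zeta> - 1) * inverse (\<zeta> - 1)) *s x"
    by (simp add: vec_eq_iff left_diff_distrib)
  also have "\<dots> = x"
    using \<open>\<zeta> \<noteq> 1\<close> by simp
  finally show ?thesis .
qed

lemma linear_scalar_invariant_eq_0:
  fixes M :: "complex^'n \<Rightarrow> 'b::real_vector"
  assumes "linear M" "\<zeta> \<noteq> 1" "\<And>u. M (\<zeta> *s u) = M u"
  shows "M x = 0"
proof -
  let ?w = "inverse (\<zeta> - 1) *s x"
  have "M x = M (\<zeta> *s ?w - ?w)"
    by (simp only: vector_scalar_mult_sub_inverse[OF assms(2)])
  also have "\<dots> = M (\<zeta> *s ?w) - M ?w"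
    by (rule linear_diff[OF assms(1)])
  also have "\<dots> = 0"
    by (simp only: assms(3) diff_self)
  finally show ?thesis .
qed

lemma exists_linear_scalar_coboundary:
  fixes L :: "complex^'n \<Rightarrow> 'b::real_vector"
  assumes "linear L" "\<zeta> \<noteq> 1"
  obtains l where "linear l" "\<And>x. l (\<zeta> *s x) - l x = L x"
proof
  let ?w = "inverse (\<zeta> - 1)"
  show "linear (\<lambda>y. L (?w *s y))"
    using linear_compose[OF linear_vector_scalar_mult assms(1)] by (simp add: o_def)
  fix x
  have "L (?w *s (\<zeta> *s x)) - L (?w *s x) = L (\<zeta> *s (?w *s x) - ?w *s x)"
    by (simp add: linear_diff[OF assms(1)] mult.commute)
  also have "\<dots> = L x"
    by (simp only: vector_scalar_mult_sub_inverse[OF assms(2)])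
  finally show "L (?w *s (\<zeta> *s x)) - L (?w *s x) = L x" .
qed

lemma invariant_sub_scalar_coboundary:
  fixes f l :: "complex^'n \<Rightarrow> 'b::real_vector"
  assumes "linear (\<lambda>x. f (g *v x) - f x)" "linear l" "\<zeta> \<noteq> 1"
    and coboundary: "\<And>x. l (\<zeta> *s x) - l x = f (\<zeta> *s x) - f x"
  shows "f (g *v x) - l (g *v x) = f x - l x"
proof -
  define M where "M x = (f (g *v x) - f x) - (l (g *v x) - l x)" for x
  have "linear (\<lambda>x. l (g *v x))"
    using linear_compose[OF bounded_linear.linear[OF matrix_vector_mul_bounded_linear] assms(2)]
    by (simp add: o_def)
  then have "linear M"
    unfolding M_def by (rule linear_compose_sub[OF assms(1) linear_compose_sub[OF _ assms(2)]])
  moreover have "M (\<zeta> *s u) = M u" for u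
    using coboundary[of u] coboundary[of "g *v u"]
    by (simp add: M_def vector_scalar_commute algebra_simps)
  ultimately have "M x = 0"
    using linear_scalar_invariant_eq_0[OF _ assms(3)] by blast
  then show ?thesis
    by (simp add: M_def algebra_simps)
qed

definition transvection :: "'n::finite \<Rightarrow> 'n \<Rightarrow> 'a::comm_ring_1 \<Rightarrow> 'a^'n^'n" where
  "transvection k l c = (\<chi> r. if r = k then row k (mat 1) + c *s row l (mat 1) else row r (mat 1))"

lemma det_transvection: "k \<noteq> l \<Longrightarrow> det (transvection k l c) = 1"
  unfolding transvection_def using det_row_operation[of k l "mat 1" c] by simp

lemma transvection_mult_vec:
  "k \<noteq> l \<Longrightarrow> transvection k l c *v x = (\<chi> r. if r = k then x$k + c * x$l else x$r)"
  unfolding transvection_def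
  by (auto simp: vec_eq_iff matrix_vector_mult_def row_def mat_def distrib_right sum.distrib
      if_distrib[where f="\<lambda>u. u * _"] if_distrib[where f="\<lambda>u. c * u"] cong: if_cong)

lemma SL_invariant_coordinate_update:
  fixes h :: "'a::field^'n \<Rightarrow> 'b"
  assumes inv: "\<And>g y. det g = 1 \<Longrightarrow> h (g *v y) = h y"
    and "k \<noteq> l" "x$l \<noteq> 0"
  shows "h (\<chi> r. if r = k then a else x$r) = h x"
proof -
  have "transvection k l ((a - x$k) / x$l) *v x = (\<chi> r. if r = k then a else x$r)"
    using assms(2,3) by (simp add: transvection_mult_vec vec_eq_iff)
  then show ?thesis
    using inv[OF det_transvection[OF assms(2)]] by metis
qed

lemma SL_invariant_coordinates_update:
  fixes h :: "'a::field^'n \<Rightarrow> 'b"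
  assumes inv: "\<And>g y. det g = 1 \<Longrightarrow> h (g *v y) = h y"
    and "l \<notin> K" "x$l \<noteq> 0"
  shows "h (\<chi> r. if r \<in> K then a r else x$r) = h x"
proof -
  have "finite K" by simp
  then show ?thesis
    using assms(2)
  proof (induction K rule: finite_induct)
    case empty
    then show ?case by simp
  next
    case (insert k K)
    let ?y = "\<chi> r. if r \<in> K then a r else x$r"
    have "(\<chi> r. if r \<in> insert k K then a r else x$r) = (\<chi> r. if r = k then a k else ?y$r)"
      by (auto simp: vec_eq_iff)
    also have "h \<dots> = h ?y"
      using insert assms(3) by (intro SL_invariant_coordinate_update[where h = h, OF inv]) auto
    finally show ?case using insert by simp
  qed
qed

lemma SL_invariant_scalar_mult:
  fixes h :: "'a::field^'n \<Rightarrow> 'b"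
  assumes inv: "\<And>g y. det g = 1 \<Longrightarrow> h (g *v y) = h y"
    and "CARD('n) \<ge> 2" "c \<noteq> 0"
  shows "h (c *s x) = h x"
proof (cases "x = 0")
  case False
  then obtain j where j: "x$j \<noteq> 0" by (auto simp: vec_eq_iff)
  have "\<not> CARD('n) \<le> Suc 0" using assms(2) by simp
  then obtain a b :: 'n where "a \<noteq> b"
    using card_le_Suc0_iff_eq[of "UNIV :: 'n set"] by auto
  then obtain i where ij: "i \<noteq> j" by (metis (full_types))
  define y where "y = (\<chi> r. if r = i then 1 else x$r)"
  define z where "z = (\<chi> r. if r \<in> - {i} then c * x$r else y$r)"
  have "h y = h x"
    unfolding y_def by (rule SL_invariant_coordinate_update[where h = h, OF inv ij j])
  moreover have "h z = h y"
    unfolding z_def by (rule SL_invariant_coordinates_update[where h = h and l = i, OF inv]) (simp_all add: y_def)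
  moreover have "c *s x = (\<chi> r. if r = i then c * x$i else z$r)"
    by (simp add: vec_eq_iff z_def y_def)
  moreover have "h \<dots> = h z"
    using ij j assms(3)
    by (intro SL_invariant_coordinate_update[where h = h, OF inv, where l = j]) (simp_all add: z_def y_def)
  ultimately show ?thesis by simp
qed simp

lemma continuous_SL_invariant_eq_0:
  fixes h :: "complex^'n \<Rightarrow> 'b::t2_space"
  assumes inv: "\<And>g y. det g = 1 \<Longrightarrow> h (g *v y) = h y"
    and "CARD('n) \<ge> 2" "continuous_on UNIV h"
  shows "h x = h 0"
proof -
  have "(\<lambda>n. inverse (real (Suc n)) *\<^sub>R x) \<longlonglongrightarrow> 0 *\<^sub>R x"
    by (intro tendsto_scaleR LIMSEQ_inverse_real_of_nat tendsto_const)
  then have "(\<lambda>n. h (inverse (real (Suc n)) *\<^sub>R x)) \<longlonglongrightarrow> h 0"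
    using continuous_on_tendsto_compose[OF assms(3)] by fastforce
  moreover have "h (r *\<^sub>R x) = h x" if "r \<noteq> 0" for r
    using SL_invariant_scalar_mult[where h = h, OF inv assms(2), of "of_real r" x] that
    by (metis of_real_vector_scalar_mult of_real_eq_0_iff)
  ultimately show ?thesis by (simp add: LIMSEQ_const_iff)
qed

theorem lemma3p1:
  fixes f :: "complex ^ 'm \<Rightarrow> real"
  assumes dim: "CARD('m) \<ge> 2"
    and cont: "continuous_on UNIV f"
    and lin: "\<And>g :: complex ^ 'm ^ 'm. det g = 1 \<Longrightarrow> linear (\<lambda>x. f (g *v x) - f x)"
  shows "\<exists>l c. linear l \<and> (\<forall>x. f x = l x + c)"
proof -
  obtain \<zeta> :: complex where \<zeta>: "\<zeta> ^ CARD('m) = 1" "\<zeta> \<noteq> 1"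
    using exists_nontrivial_root_of_unity[OF dim] by blast
  have "linear (\<lambda>x. f (\<zeta> *s x) - f x)"
    using lin[of "mat \<zeta>"] \<zeta>(1) by (simp add: det_mat matrix_vector_mult_mat)
  from exists_linear_scalar_coboundary[OF this \<zeta>(2)]
  obtain l where l: "linear l" "\<And>x. l (\<zeta> *s x) - l x = f (\<zeta> *s x) - f x" by blast
  define h where "h x = f x - l x" for x
  have inv: "h (g *v x) = h x" if "det g = 1" for g x
    unfolding h_def using lin[OF that] l(1) \<zeta>(2) l(2) by (rule invariant_sub_scalar_coboundary)
  have "continuous_on UNIV h"
    unfolding h_def using l(1)
    by (intro continuous_on_diff cont linear_continuous_on) (simp add: linear_conv_bounded_linear)
  then have "h x = h 0" for x
    using continuous_SL_invariant_eq_0[where h = h, OF inv dim] by blast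
  then have "f x = l x + h 0" for x
    unfolding h_def by (metis add.commute diff_add_cancel)
  with l(1) show ?thesis by blast
qed

end
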